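(* Let $\mathscr T$ be a functor satisfying (T1)–(T4) and $\mathcal M=(M,\le,{}^\perp)$ a complete orthomodular lattice, and put $L_{\mathcal M}=\mathscr T(\mathbf{Lin}(\mathcal M))$. Then $\mathscr P(L_{\mathcal M})=(\mathscr P(L_{\mathcal M}),\bigcup,\odot,{}^*,{\sim},\{\mathrm{id}_M\})$ is a $\mathscr T$-based orthomodular dynamic algebra.
   Context: An involutive unital quantale is $(Q,\bigsqcup,\odot,{}^*,e)$: complete join-semilattice $Q$, associative $\odot$ distributing over arbitrary joins in each argument, unit $e$, ${}^*$ with $x^{**}=x$, $(x\odot y)^*=y^*\odot x^*$, $(\bigsqcup x_i)^*=\bigsqcup x_i^*$. An involutive generalized dynamic algebra (IDA) is such a quantale with ${\sim}\colon K\to K$ satisfying, for all $x,y$ and families $(x_i)$: ${\sim}(x\odot{\sim}{\sim}y)={\sim}(x\odot y)$; ${\sim}(\bigsqcup{\sim}{\sim}x_i)={\sim}(\bigsqcup x_i)$; $({\sim}x)^*={\sim}x$; ${\sim}{\sim}({\sim}{\sim}x\odot y)={\sim}({\sim}x\sqcup{\sim}({\sim}x\sqcup y))$. Test set $\widetilde K=\{{\sim}k\}$; $\bigvee W={\sim}{\sim}\bigsqcup W$; $w^\perp={\sim}w$; $k\preceq l$ iff $\bigvee\{k,l\}=l$; $k\bullet v={\sim}{\sim}(k\odot v)$; $k\equiv l$ iff $k\bullet w=l\bullet w$ for all $w\in\widetilde K$. IDA morphisms preserve arbitrary joins, $\odot$, ${}^*$, unit, ${\sim}$ (category $\mathbb{IDA}$);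 semi-Foulis means $(\widetilde K,\preceq,{}^\perp)$ is a complete orthomodular lattice. $\mathbb{IM}$: involutive monoids and homomorphisms. For a complete orthomodular lattice $\mathcal M$: $\pi_m(x)=m\wedge(m^\perp\vee x)$; $\mathbf{Lin}(\mathcal M)$ is the set of maps $f$ admitting $f^*$ with $f(x)\le y^\perp\iff x\le f^*(y)^\perp$, an IDA under pointwise joins, composition, ${}^*$, $\mathrm{id}$, ${\sim}f=\pi_{f(1)^\perp}$, with test set $\{\pi_m\mid m\in M\}$. For an involutive submonoid $L\supseteq\{\pi_m\}$, $\mathscr P(L)$ is the IDA of subsets of $L$ with union, $A\odot B=\{a\circ b\mid a\in A,b\in B\}$, $A^*=\{a^*\mid a\in A\}$, unit $\{\mathrm{id}_M\}$, ${\sim}A=\{\pi_{(\bigvee_{a\in A}a(1))^\perp}\}$. $\mathscr T\colon\mathbb{IDA}\to\mathbb{IM}$ satisfies: (T1) $\widetilde K\subseteq\mathscr T(K)\subseteq K$, $\mathscr T(K)$ an involutive submonoid of $(K,\odot,{}^*,e)$; (T2) for semi-Foulis $\mathfrak K$ with $s=t\iff s\equiv t$ on $\mathscr T(K)$, $k\mapsto k\bullet(-)$ is an isomorphism $\mathscr T(\mathfrak K)\to\mathscr T(\mathbf{Lin}(\widetilde{\mathfrak K}))$; (T3) $f\mapsto\{f\}$ is an isomorphism $\mathscr T(\mathbf{Lin}(\mathcal M))\to\mathscr T(\mathscr P(\mathscr T(\mathbf{Lin}(\mathcal M))))$ for every complete orthomodular lattice $\mathcal M$; (T4) $\mathscr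 T(f)$ is the restriction of $f$. A $\mathscr T$-based orthomodular dynamic algebra is an IDA with: (TODA1) $(\widetilde K,\preceq,{}^\perp)$ a complete orthomodular lattice; (TODA2) every $A$ with $\mathscr T(K)\subseteq A\subseteq K$ closed under $\odot$, ${}^*$, arbitrary joins equals $K$; (TODA3) for $S,T\subseteq\mathscr T(K)$, $\bigsqcup S=\bigsqcup T$ iff $S=T$; (TODA4) for $s,t\in\mathscr T(K)$, $s=t$ iff $s\equiv t$. *)

theory Defs
  imports "HOL-Library.FuncSet"
begin

definition is_lub :: "'a set \<Rightarrow> ('a \<Rightarrow> 'a \<Rightarrow> bool) \<Rightarrow> 'a set \<Rightarrow> 'a \<Rightarrow> bool" where
  "is_lub A le B s \<longleftrightarrow> s \<in> A \<and> (\<forall>b\<in>B. le b s) \<and> (\<forall>x\<in>A. (\<forall>b\<in>B. le b x) \<longrightarrow> le s x)"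

definition is_glb :: "'a set \<Rightarrow> ('a \<Rightarrow> 'a \<Rightarrow> bool) \<Rightarrow> 'a set \<Rightarrow> 'a \<Rightarrow> bool" where
  "is_glb A le B s \<longleftrightarrow> s \<in> A \<and> (\<forall>b\<in>B. le s b) \<and> (\<forall>x\<in>A. (\<forall>b\<in>B. le x b) \<longrightarrow> le x s)"

definition lsup :: "'a set \<Rightarrow> ('a \<Rightarrow> 'a \<Rightarrow> bool) \<Rightarrow> 'a set \<Rightarrow> 'a" where
  "lsup A le B = (THE s. is_lub A le B s)"

definition linf :: "'a set \<Rightarrow> ('a \<Rightarrow> 'a \<Rightarrow> bool) \<Rightarrow> 'a set \<Rightarrow> 'a" where
  "linf A le B = (THE s. is_glb A le B s)"

definition complete_oml :: "'a set \<Rightarrow> ('a \<Rightarrow> 'a \<Rightarrow> bool) \<Rightarrow> ('a \<Rightarrow> 'a) \<Rightarrow> bool" where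
  "complete_oml A le p \<longleftrightarrow>
     (\<forall>x\<in>A. le x x) \<and>
     (\<forall>x\<in>A. \<forall>y\<in>A. le x y \<and> le y x \<longrightarrow> x = y) \<and>
     (\<forall>x\<in>A. \<forall>y\<in>A. \<forall>z\<in>A. le x y \<and> le y z \<longrightarrow> le x z) \<and>
     (\<forall>B. B \<subseteq> A \<longrightarrow> (\<exists>s. is_lub A le B s)) \<and>
     (\<forall>x\<in>A. p x \<in> A \<and> p (p x) = x) \<and>
     (\<forall>x\<in>A. \<forall>y\<in>A. le x y \<longrightarrow> le (p y) (p x)) \<and>
     (\<forall>x\<in>A. linf A le {x, p x} = lsup A le {} \<and> lsup A le {x, p x} = lsup A le A) \<and>
     (\<forall>x\<in>A. \<forall>y\<in>A. le x y \<longrightarrow> y = lsup A le {x, linf A le {y, p x}})"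

record 'm ortho =
  ocar :: "'m set"
  ole :: "'m \<Rightarrow> 'm \<Rightarrow> bool"
  operp :: "'m \<Rightarrow> 'm"

abbreviation is_complete_oml :: "'m ortho \<Rightarrow> bool" where
  "is_complete_oml M \<equiv> complete_oml (ocar M) (ole M) (operp M)"

definition ojoin :: "'m ortho \<Rightarrow> 'm set \<Rightarrow> 'm" where
  "ojoin M B = lsup (ocar M) (ole M) B"

definition omeet :: "'m ortho \<Rightarrow> 'm set \<Rightarrow> 'm" where
  "omeet M B = linf (ocar M) (ole M) B"

definition otop :: "'m ortho \<Rightarrow> 'm" where
  "otop M = ojoin M (ocar M)"

record 'a ida =
  kcar :: "'a set"
  kjoin :: "'a set \<Rightarrow> 'a"
  kmult :: "'a \<Rightarrow> 'a \<Rightarrow> 'a"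
  kstar :: "'a \<Rightarrow> 'a"
  kunit :: "'a"
  kneg :: "'a \<Rightarrow> 'a"

definition kle :: "'a ida \<Rightarrow> 'a \<Rightarrow> 'a \<Rightarrow> bool" where
  "kle K x y \<longleftrightarrow> kjoin K {x, y} = y"

definition complete_join_semilattice :: "'a ida \<Rightarrow> bool" where
  "complete_join_semilattice K \<longleftrightarrow>
     (\<forall>x\<in>kcar K. kle K x x) \<and>
     (\<forall>x\<in>kcar K. \<forall>y\<in>kcar K. kle K x y \<and> kle K y x \<longrightarrow> x = y) \<and>
     (\<forall>x\<in>kcar K. \<forall>y\<in>kcar K. \<forall>z\<in>kcar K. kle K x y \<and> kle K y z \<longrightarrow> kle K x z) \<and>
     (\<forall>B. B \<subseteq> kcar K \<longrightarrow> is_lub (kcar K) (kle K) B (kjoin K B))"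

definition involutive_unital_quantale :: "'a ida \<Rightarrow> bool" where
  "involutive_unital_quantale K \<longleftrightarrow>
     complete_join_semilattice K \<and>
     (\<forall>x\<in>kcar K. \<forall>y\<in>kcar K. kmult K x y \<in> kcar K) \<and>
     (\<forall>x\<in>kcar K. \<forall>y\<in>kcar K. \<forall>z\<in>kcar K. kmult K (kmult K x y) z = kmult K x (kmult K y z)) \<and>
     (\<forall>x\<in>kcar K. \<forall>B. B \<subseteq> kcar K \<longrightarrow>
        kmult K x (kjoin K B) = kjoin K ((\<lambda>b. kmult K x b) ` B) \<and>
        kmult K (kjoin K B) x = kjoin K ((\<lambda>b. kmult K b x) ` B)) \<and>
     kunit K \<in> kcar K \<and>
     (\<forall>x\<in>kcar K. kmult K (kunit K) x = x \<and> kmult K x (kunit K) = x) \<and>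
     (\<forall>x\<in>kcar K. kstar K x \<in> kcar K \<and> kstar K (kstar K x) = x) \<and>
     (\<forall>x\<in>kcar K. \<forall>y\<in>kcar K. kstar K (kmult K x y) = kmult K (kstar K y) (kstar K x)) \<and>
     (\<forall>B. B \<subseteq> kcar K \<longrightarrow> kstar K (kjoin K B) = kjoin K (kstar K ` B))"

definition is_ida :: "'a ida \<Rightarrow> bool" where
  "is_ida K \<longleftrightarrow>
     involutive_unital_quantale K \<and>
     (\<forall>x\<in>kcar K. kneg K x \<in> kcar K) \<and>
     (\<forall>x\<in>kcar K. \<forall>y\<in>kcar K.
        kneg K (kmult K x (kneg K (kneg K y))) = kneg K (kmult K x y)) \<and>
     (\<forall>B. B \<subseteq> kcar K \<longrightarrow>
        kneg K (kjoin K ((\<lambda>x. kneg K (kneg K x)) ` B)) = kneg K (kjoin K B)) \<and>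
     (\<forall>x\<in>kcar K. kstar K (kneg K x) = kneg K x) \<and>
     (\<forall>x\<in>kcar K. \<forall>y\<in>kcar K.
        kneg K (kneg K (kmult K (kneg K (kneg K x)) y)) =
        kneg K (kjoin K {kneg K x, kneg K (kjoin K {kneg K x, y})}))"

definition tests :: "'a ida \<Rightarrow> 'a set" where
  "tests K = kneg K ` kcar K"

definition tle :: "'a ida \<Rightarrow> 'a \<Rightarrow> 'a \<Rightarrow> bool" where
  "tle K k l \<longleftrightarrow> kneg K (kneg K (kjoin K {k, l})) = l"

definition bullet :: "'a ida \<Rightarrow> 'a \<Rightarrow> 'a \<Rightarrow> 'a" where
  "bullet K k v = kneg K (kneg K (kmult K k v))"

definition kequiv :: "'a ida \<Rightarrow> 'a \<Rightarrow> 'a \<Rightarrow> bool" where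
  "kequiv K k l \<longleftrightarrow> (\<forall>w\<in>tests K. bullet K k w = bullet K l w)"

definition ida_hom :: "'a ida \<Rightarrow> 'b ida \<Rightarrow> ('a \<Rightarrow> 'b) \<Rightarrow> bool" where
  "ida_hom K K' h \<longleftrightarrow>
     (\<forall>x\<in>kcar K. h x \<in> kcar K') \<and>
     (\<forall>B. B \<subseteq> kcar K \<longrightarrow> h (kjoin K B) = kjoin K' (h ` B)) \<and>
     (\<forall>x\<in>kcar K. \<forall>y\<in>kcar K. h (kmult K x y) = kmult K' (h x) (h y)) \<and>
     (\<forall>x\<in>kcar K. h (kstar K x) = kstar K' (h x)) \<and>
     h (kunit K) = kunit K' \<and>
     (\<forall>x\<in>kcar K. h (kneg K x) = kneg K' (h x))"

definition inv_submonoid :: "'a ida \<Rightarrow> 'a set \<Rightarrow> bool" where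
  "inv_submonoid K S \<longleftrightarrow> S \<subseteq> kcar K \<and> kunit K \<in> S \<and>
     (\<forall>x\<in>S. \<forall>y\<in>S. kmult K x y \<in> S) \<and> (\<forall>x\<in>S. kstar K x \<in> S)"

definition im_iso :: "'a ida \<Rightarrow> 'a set \<Rightarrow> 'b ida \<Rightarrow> 'b set \<Rightarrow> ('a \<Rightarrow> 'b) \<Rightarrow> bool" where
  "im_iso K S K' S' h \<longleftrightarrow> bij_betw h S S' \<and>
     (\<forall>x\<in>S. \<forall>y\<in>S. h (kmult K x y) = kmult K' (h x) (h y)) \<and>
     (\<forall>x\<in>S. h (kstar K x) = kstar K' (h x)) \<and>
     h (kunit K) = kunit K'"

definition T_based_oda :: "('a ida \<Rightarrow> 'a set) \<Rightarrow> 'a ida \<Rightarrow> bool" where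
  "T_based_oda T K \<longleftrightarrow>
     is_ida K \<and>
     complete_oml (tests K) (tle K) (kneg K) \<and>
     (\<forall>A. T K \<subseteq> A \<and> A \<subseteq> kcar K \<and>
          (\<forall>x\<in>A. \<forall>y\<in>A. kmult K x y \<in> A) \<and> (\<forall>x\<in>A. kstar K x \<in> A) \<and>
          (\<forall>B. B \<subseteq> A \<longrightarrow> kjoin K B \<in> A) \<longrightarrow> A = kcar K) \<and>
     (\<forall>S U. S \<subseteq> T K \<and> U \<subseteq> T K \<longrightarrow> (kjoin K S = kjoin K U \<longleftrightarrow> S = U)) \<and>
     (\<forall>s\<in>T K. \<forall>t\<in>T K. s = t \<longleftrightarrow> kequiv K s t)"

text \<open>Maps M \<rightarrow> M are represented extensionally (value undefined off the carrier).\<close>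
definition pi_proj :: "'m ortho \<Rightarrow> 'm \<Rightarrow> ('m \<Rightarrow> 'm)" where
  "pi_proj M m = (\<lambda>x\<in>ocar M. omeet M {m, ojoin M {operp M m, x}})"

definition is_adjoint :: "'m ortho \<Rightarrow> ('m \<Rightarrow> 'm) \<Rightarrow> ('m \<Rightarrow> 'm) \<Rightarrow> bool" where
  "is_adjoint M f g \<longleftrightarrow> g \<in> ocar M \<rightarrow>\<^sub>E ocar M \<and>
     (\<forall>x\<in>ocar M. \<forall>y\<in>ocar M. ole M (f x) (operp M y) \<longleftrightarrow> ole M x (operp M (g y)))"

definition Lin :: "'m ortho \<Rightarrow> ('m \<Rightarrow> 'm) set" where
  "Lin M = {f \<in> ocar M \<rightarrow>\<^sub>E ocar M. \<exists>g. is_adjoint M f g}"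

definition adj :: "'m ortho \<Rightarrow> ('m \<Rightarrow> 'm) \<Rightarrow> ('m \<Rightarrow> 'm)" where
  "adj M f = (THE g. is_adjoint M f g)"

definition idM :: "'m ortho \<Rightarrow> ('m \<Rightarrow> 'm)" where
  "idM M = (\<lambda>x\<in>ocar M. x)"

definition lin_ida :: "'m ortho \<Rightarrow> ('m \<Rightarrow> 'm) ida" where
  "lin_ida M = \<lparr> kcar = Lin M,
     kjoin = (\<lambda>F. \<lambda>x\<in>ocar M. ojoin M ((\<lambda>f. f x) ` F)),
     kmult = (\<lambda>f g. compose (ocar M) f g),
     kstar = adj M,
     kunit = idM M,
     kneg = (\<lambda>f. pi_proj M (operp M (f (otop M)))) \<rparr>"

definition pset_ida :: "'m ortho \<Rightarrow> ('m \<Rightarrow> 'm) set \<Rightarrow> ('m \<Rightarrow> 'm) set ida" where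
  "pset_ida M L = \<lparr> kcar = Pow L,
     kjoin = (\<lambda>\<A>. \<Union>\<A>),
     kmult = (\<lambda>A B. {compose (ocar M) a b | a b. a \<in> A \<and> b \<in> B}),
     kstar = (\<lambda>A. adj M ` A),
     kunit = {idM M},
     kneg = (\<lambda>A. {pi_proj M (operp M (ojoin M ((\<lambda>a. a (otop M)) ` A)))}) \<rparr>"

section \<open>Conditions on the functor T (instances at the relevant types)\<close>

definition T1 :: "('a ida \<Rightarrow> 'a set) \<Rightarrow> bool" where
  "T1 T \<longleftrightarrow> (\<forall>K. is_ida K \<longrightarrow> tests K \<subseteq> T K \<and> inv_submonoid K (T K))"

text \<open>(T4): T(f) is the restriction of f, i.e. f maps T(K) into T(K').\<close>
definition T4 :: "('a ida \<Rightarrow> 'a set) \<Rightarrow> ('b ida \<Rightarrow> 'b set) \<Rightarrow> bool" where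
  "T4 T T' \<longleftrightarrow> (\<forall>K K' h. is_ida K \<and> is_ida K' \<and> ida_hom K K' h \<longrightarrow> h ` T K \<subseteq> T' K')"

definition T3 :: "(('m \<Rightarrow> 'm) ida \<Rightarrow> ('m \<Rightarrow> 'm) set) \<Rightarrow>
                  (('m \<Rightarrow> 'm) set ida \<Rightarrow> ('m \<Rightarrow> 'm) set set) \<Rightarrow> bool" where
  "T3 Ta Tb \<longleftrightarrow> (\<forall>M. is_complete_oml M \<longrightarrow>
     im_iso (lin_ida M) (Ta (lin_ida M)) (pset_ida M (Ta (lin_ida M)))
            (Tb (pset_ida M (Ta (lin_ida M)))) (\<lambda>f. {f}))"

end

(*
  Both Lin(M) and P(L) are involutive quantales whose negation factors through a join-preserving
  valuation into M -- evaluation at the top element f |-> f(1) for Lin(M), and A |-> \<Squnion>{a(1) | a \<in> A}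
  for P(L) -- via ~k = \<pi>_{(val k)^\<bottom>}.  For such quantales all IDA axioms reduce to lattice identities
  in M, the only non-trivial one being the expression of the Sasaki projection
  \<pi>_a(b) = a \<sqinter> (a^\<bottom> \<squnion> b) as (a^\<bottom> \<squnion> (a^\<bottom> \<squnion> b)^\<bottom>)^\<bottom>; moreover m |-> \<pi>_m (resp. {\<pi>_m})
  is an isomorphism of M onto the tests, which therefore form a complete orthomodular lattice.
  By (T3), T(P(L)) consists of the singletons {f} with f \<in> L.  Every subset of L is a union of
  singletons, a set of singletons is determined by its union, and {f} \<bullet> {\<pi>_m} = {\<pi>_f(m)}, so
  {f} \<equiv> {g} forces f = g because m |-> \<pi>_m is injective.
*)
theory Submission
  imports Defs
begin

section \<open>Complete orthomodular lattices\<close>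

locale complete_orthomodular =
  fixes M :: "'m ortho"
  assumes oml: "is_complete_oml M"
begin

abbreviation "C \<equiv> ocar M"
abbreviation "le \<equiv> ole M"
abbreviation "perp \<equiv> operp M"
abbreviation "Join \<equiv> ojoin M"
abbreviation "Meet \<equiv> omeet M"
abbreviation "Top \<equiv> otop M"

lemma ole_refl: "x \<in> C \<Longrightarrow> le x x"
  using oml unfolding complete_oml_def by metis

lemma ole_antisym: "x \<in> C \<Longrightarrow> y \<in> C \<Longrightarrow> le x y \<Longrightarrow> le y x \<Longrightarrow> x = y"
  using oml unfolding complete_oml_def by metis

lemma ole_trans: "x \<in> C \<Longrightarrow> y \<in> C \<Longrightarrow> z \<in> C \<Longrightarrow> le x y \<Longrightarrow> le y z \<Longrightarrow> le x z"
  using oml unfolding complete_oml_def by metis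

lemma perp_in [simp]: "x \<in> C \<Longrightarrow> perp x \<in> C"
  using oml unfolding complete_oml_def by metis

lemma perp_perp [simp]: "x \<in> C \<Longrightarrow> perp (perp x) = x"
  using oml unfolding complete_oml_def by metis

lemma perp_antimono: "x \<in> C \<Longrightarrow> y \<in> C \<Longrightarrow> le x y \<Longrightarrow> le (perp y) (perp x)"
  using oml unfolding complete_oml_def by metis

lemma perp_le_perp_iff: "x \<in> C \<Longrightarrow> y \<in> C \<Longrightarrow> le (perp x) (perp y) \<longleftrightarrow> le y x"
  using perp_antimono[of "perp x" "perp y"] perp_antimono[of y x] by auto

lemma le_perp_commute: "x \<in> C \<Longrightarrow> y \<in> C \<Longrightarrow> le x (perp y) \<longleftrightarrow> le y (perp x)"
  using perp_le_perp_iff[of "perp y" x] by simp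

lemma eq_if_same_upper_bounds: "a \<in> C \<Longrightarrow> b \<in> C \<Longrightarrow> (\<And>z. z \<in> C \<Longrightarrow> le a z \<longleftrightarrow> le b z) \<Longrightarrow> a = b"
  by (meson ole_antisym ole_refl)

lemma eq_if_same_lower_bounds: "a \<in> C \<Longrightarrow> b \<in> C \<Longrightarrow> (\<And>z. z \<in> C \<Longrightarrow> le z a \<longleftrightarrow> le z b) \<Longrightarrow> a = b"
  by (meson ole_antisym ole_refl)

lemma is_lub_unique: "is_lub C le B s \<Longrightarrow> is_lub C le B t \<Longrightarrow> s = t"
  unfolding is_lub_def by (meson ole_antisym)

lemma is_glb_unique: "is_glb C le B s \<Longrightarrow> is_glb C le B t \<Longrightarrow> s = t"
  unfolding is_glb_def by (meson ole_antisym)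

lemma is_lub_Join: "B \<subseteq> C \<Longrightarrow> is_lub C le B (Join B)"
proof -
  assume "B \<subseteq> C"
  then obtain s where s: "is_lub C le B s"
    using oml unfolding complete_oml_def by metis
  then have "Join B = s"
    unfolding ojoin_def lsup_def using is_lub_unique by (intro the_equality) blast+
  with s show ?thesis
    by simp
qed

lemma Join_in [simp]: "B \<subseteq> C \<Longrightarrow> Join B \<in> C"
  using is_lub_Join unfolding is_lub_def by blast

lemma Join_upper: "B \<subseteq> C \<Longrightarrow> b \<in> B \<Longrightarrow> le b (Join B)"
  using is_lub_Join unfolding is_lub_def by blast

lemma Join_le_iff: "B \<subseteq> C \<Longrightarrow> z \<in> C \<Longrightarrow> le (Join B) z \<longleftrightarrow> (\<forall>b\<in>B. le b z)"
  using is_lub_Join[of B] Join_upper[of B] ole_trans[of _ "Join B" z] unfolding is_lub_def by blast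

lemma is_glb_Join_lower_bounds:
  assumes "B \<subseteq> C"
  shows "is_glb C le B (Join {x\<in>C. \<forall>b\<in>B. le x b})"
  unfolding is_glb_def
proof (intro conjI ballI impI)
  let ?L = "{x\<in>C. \<forall>b\<in>B. le x b}"
  have L: "?L \<subseteq> C"
    by blast
  show "Join ?L \<in> C"
    using L by simp
  show "le (Join ?L) b" if "b \<in> B" for b
    using that assms L by (subst Join_le_iff) auto
  show "le x (Join ?L)" if "x \<in> C" "\<forall>b\<in>B. le x b" for x
    using that L by (intro Join_upper) auto
qed

lemma is_glb_Meet: "B \<subseteq> C \<Longrightarrow> is_glb C le B (Meet B)"
proof -
  assume "B \<subseteq> C"
  then have s: "is_glb C le B (Join {x\<in>C. \<forall>b\<in>B. le x b})"
    by (rule is_glb_Join_lower_bounds)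
  then have "Meet B = Join {x\<in>C. \<forall>b\<in>B. le x b}"
    unfolding omeet_def linf_def using is_glb_unique by (intro the_equality) blast+
  with s show ?thesis
    by simp
qed

lemma Meet_in [simp]: "B \<subseteq> C \<Longrightarrow> Meet B \<in> C"
  using is_glb_Meet unfolding is_glb_def by blast

lemma Meet_lower: "B \<subseteq> C \<Longrightarrow> b \<in> B \<Longrightarrow> le (Meet B) b"
  using is_glb_Meet unfolding is_glb_def by blast

lemma le_Meet_iff: "B \<subseteq> C \<Longrightarrow> z \<in> C \<Longrightarrow> le z (Meet B) \<longleftrightarrow> (\<forall>b\<in>B. le z b)"
  using is_glb_Meet[of B] Meet_lower[of B] ole_trans[of z "Meet B"] unfolding is_glb_def by blast

lemma perp_Join:
  assumes B: "B \<subseteq> C"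
  shows "perp (Join B) = Meet (perp ` B)"
proof (rule eq_if_same_lower_bounds)
  have pB: "perp ` B \<subseteq> C"
    using B by auto
  show "perp (Join B) \<in> C" "Meet (perp ` B) \<in> C"
    using B pB by auto
  fix z assume z: "z \<in> C"
  have "le z (perp (Join B)) \<longleftrightarrow> le (Join B) (perp z)"
    using B z by (simp add: le_perp_commute)
  also have "\<dots> \<longleftrightarrow> (\<forall>b\<in>B. le b (perp z))"
    using B z by (simp add: Join_le_iff)
  also have "\<dots> \<longleftrightarrow> (\<forall>b\<in>B. le z (perp b))"
    using B z le_perp_commute by blast
  also have "\<dots> \<longleftrightarrow> le z (Meet (perp ` B))"
    using pB z by (simp add: le_Meet_iff)
  finally show "le z (perp (Join B)) \<longleftrightarrow> le z (Meet (perp ` B))" .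
qed

lemma perp_Meet:
  assumes B: "B \<subseteq> C"
  shows "perp (Meet B) = Join (perp ` B)"
proof -
  have pB: "perp ` B \<subseteq> C"
    using B by auto
  have "perp ` perp ` B = B"
    using B by (force simp: image_image)
  then have "Meet B = perp (Join (perp ` B))"
    using perp_Join[OF pB] by simp
  then show ?thesis
    using pB by simp
qed

lemma Top_in [simp]: "Top \<in> C"
  by (simp add: otop_def)

lemma le_Top: "x \<in> C \<Longrightarrow> le x Top"
  by (simp add: otop_def Join_upper)

lemma Join_singleton: "x \<in> C \<Longrightarrow> Join {x} = x"
  by (rule eq_if_same_upper_bounds) (auto simp: Join_le_iff)

lemma Join_Union:
  assumes S: "\<And>A. A \<in> S \<Longrightarrow> A \<subseteq> C"
  shows "Join (\<Union>S) = Join (Join ` S)"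
proof (rule eq_if_same_upper_bounds)
  have U: "\<Union>S \<subseteq> C" and J: "Join ` S \<subseteq> C"
    using S by auto
  then show "Join (\<Union>S) \<in> C" "Join (Join ` S) \<in> C"
    by simp_all
  fix z assume z: "z \<in> C"
  have "le (Join (\<Union>S)) z \<longleftrightarrow> (\<forall>A\<in>S. \<forall>a\<in>A. le a z)"
    using U z by (simp add: Join_le_iff)
  also have "\<dots> \<longleftrightarrow> (\<forall>A\<in>S. le (Join A) z)"
    using S z by (simp add: Join_le_iff)
  also have "\<dots> \<longleftrightarrow> le (Join (Join ` S)) z"
    using J z by (simp add: Join_le_iff)
  finally show "le (Join (\<Union>S)) z \<longleftrightarrow> le (Join (Join ` S)) z" .
qed

lemma Join_Top: "x \<in> C \<Longrightarrow> Join {x, Top} = Top"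
  by (rule eq_if_same_upper_bounds) (auto simp: Join_le_iff intro: ole_trans[OF _ Top_in] le_Top)

lemma Meet_Top: "x \<in> C \<Longrightarrow> Meet {x, Top} = x"
  by (rule eq_if_same_lower_bounds) (auto simp: le_Meet_iff le_Top)

lemma Join_pair_eq_iff: "x \<in> C \<Longrightarrow> y \<in> C \<Longrightarrow> Join {x, y} = y \<longleftrightarrow> le x y"
proof
  assume "x \<in> C" "y \<in> C" "Join {x, y} = y"
  then show "le x y"
    using Join_upper[of "{x, y}" x] by simp
next
  assume "x \<in> C" "y \<in> C" "le x y"
  then show "Join {x, y} = y"
    by (intro eq_if_same_upper_bounds) (auto simp: Join_le_iff intro: ole_trans)
qed

lemma orthomodular: "x \<in> C \<Longrightarrow> y \<in> C \<Longrightarrow> le x y \<Longrightarrow> y = Join {x, Meet {y, perp x}}"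
  using oml unfolding complete_oml_def ojoin_def omeet_def by metis

lemma orthomodular_dual: "x \<in> C \<Longrightarrow> y \<in> C \<Longrightarrow> le x y \<Longrightarrow> x = Meet {y, Join {x, perp y}}"
proof -
  assume x: "x \<in> C" and y: "y \<in> C" and "le x y"
  then have "perp x = Join {perp y, Meet {perp x, y}}"
    using orthomodular[of "perp y" "perp x"] perp_antimono by simp
  then have "perp (perp x) = perp (Join {perp y, Meet {perp x, y}})"
    by (rule arg_cong)
  also have "\<dots> = Meet {y, Join {x, perp y}}"
    using x y by (simp add: perp_Join perp_Meet)
  finally show ?thesis
    using x by simp
qed

lemma complement_Meet_Join: "x \<in> C \<Longrightarrow> Meet {x, perp x} = Join {} \<and> Join {x, perp x} = Top"
  using oml unfolding complete_oml_def ojoin_def omeet_def otop_def by metis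

end

section \<open>Transfer along order isomorphisms\<close>

lemma is_glb_iff_is_lub_converse: "is_glb A le X s \<longleftrightarrow> is_lub A (\<lambda>x y. le y x) X s"
  unfolding is_glb_def is_lub_def by blast

lemma linf_eq_lsup_converse: "linf A le X = lsup A (\<lambda>x y. le y x) X"
  unfolding linf_def lsup_def is_glb_iff_is_lub_converse ..

lemma is_lub_image_iff:
  assumes B: "B = h ` A" and ord: "\<And>x y. x \<in> A \<Longrightarrow> y \<in> A \<Longrightarrow> le' (h x) (h y) \<longleftrightarrow> le x y"
    and X: "X \<subseteq> A" and s: "s \<in> A"
  shows "is_lub B le' (h ` X) (h s) \<longleftrightarrow> is_lub A le X s"
  unfolding is_lub_def B using X s ord by (auto simp: subset_iff)

lemma lsup_image:
  assumes B: "B = h ` A" and ord: "\<And>x y. x \<in> A \<Longrightarrow> y \<in> A \<Longrightarrow> le' (h x) (h y) \<longleftrightarrow> le x y"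
    and antisym: "\<And>x y. x \<in> A \<Longrightarrow> y \<in> A \<Longrightarrow> le x y \<Longrightarrow> le y x \<Longrightarrow> x = y"
    and X: "X \<subseteq> A" and lub: "is_lub A le X s"
  shows "lsup B le' (h ` X) = h s"
  unfolding lsup_def
proof (rule the_equality)
  have s: "s \<in> A"
    using lub unfolding is_lub_def by blast
  then show "is_lub B le' (h ` X) (h s)"
    using is_lub_image_iff[where le = le and le' = le', OF B ord X] lub by simp
  fix t assume t: "is_lub B le' (h ` X) t"
  then obtain t' where t': "t' \<in> A" "t = h t'"
    unfolding is_lub_def B by blast
  with t have "is_lub A le X t'"
    using is_lub_image_iff[where le = le and le' = le', OF B ord X] by simp
  then have "t' = s"
    using lub antisym s t' unfolding is_lub_def by blast
  with t' show "t = h s"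
    by simp
qed

lemma linf_image:
  assumes B: "B = h ` A" and ord: "\<And>x y. x \<in> A \<Longrightarrow> y \<in> A \<Longrightarrow> le' (h x) (h y) \<longleftrightarrow> le x y"
    and antisym: "\<And>x y. x \<in> A \<Longrightarrow> y \<in> A \<Longrightarrow> le x y \<Longrightarrow> le y x \<Longrightarrow> x = y"
    and X: "X \<subseteq> A" and glb: "is_glb A le X s"
  shows "linf B le' (h ` X) = h s"
  unfolding linf_eq_lsup_converse
  by (rule lsup_image[where le = "\<lambda>x y. le y x", OF B _ _ X])
    (use ord antisym glb in \<open>auto simp: is_glb_iff_is_lub_converse\<close>)

lemma ex_is_lub_image:
  assumes B: "B = h ` A" and ord: "\<And>x y. x \<in> A \<Longrightarrow> y \<in> A \<Longrightarrow> le' (h x) (h y) \<longleftrightarrow> le x y"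
    and complete: "\<And>X. X \<subseteq> A \<Longrightarrow> \<exists>s. is_lub A le X s" and Y: "Y \<subseteq> B"
  shows "\<exists>t. is_lub B le' Y t"
proof -
  define X where "X = {x\<in>A. h x \<in> Y}"
  have X: "X \<subseteq> A" and Y_eq: "h ` X = Y"
    using Y unfolding X_def B by auto
  obtain s where s: "is_lub A le X s"
    using complete[OF X] by blast
  then have "s \<in> A"
    unfolding is_lub_def by blast
  with s have "is_lub B le' (h ` X) (h s)"
    using is_lub_image_iff[where le = le and le' = le', OF B ord X] by blast
  then show ?thesis
    unfolding Y_eq by blast
qed

lemma complete_oml_transfer:
  assumes oml: "complete_oml A le p" and bij: "bij_betw h A B"
    and ord: "\<And>x y. x \<in> A \<Longrightarrow> y \<in> A \<Longrightarrow> le' (h x) (h y) \<longleftrightarrow> le x y"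
    and perp: "\<And>x. x \<in> A \<Longrightarrow> p' (h x) = h (p x)"
  shows "complete_oml B le' p'"
proof -
  interpret A: complete_orthomodular "\<lparr>ocar = A, ole = le, operp = p\<rparr>"
    using oml by unfold_locales simp
  have B: "B = h ` A"
    using bij by (simp add: bij_betw_def)
  have ball_B: "(\<forall>x\<in>B. P x) \<longleftrightarrow> (\<forall>a\<in>A. P (h a))" for P
    unfolding B by blast
  have antisym: "\<And>x y. x \<in> A \<Longrightarrow> y \<in> A \<Longrightarrow> le x y \<Longrightarrow> le y x \<Longrightarrow> x = y"
    using A.ole_antisym by simp
  have lsup_h: "lsup B le' (h ` X) = h (lsup A le X)" if "X \<subseteq> A" for X
    using lsup_image[where le = le and le' = le', OF B ord antisym that] A.is_lub_Join[of X] that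
    by (simp add: ojoin_def)
  have linf_h: "linf B le' (h ` X) = h (linf A le X)" if "X \<subseteq> A" for X
    using linf_image[where le = le and le' = le', OF B ord antisym that] A.is_glb_Meet[of X] that
    by (simp add: omeet_def)
  have lsup_h2: "lsup B le' {h x, h y} = h (lsup A le {x, y})" if "x \<in> A" "y \<in> A" for x y
    using lsup_h[of "{x, y}"] that by simp
  have linf_h2: "linf B le' {h x, h y} = h (linf A le {x, y})" if "x \<in> A" "y \<in> A" for x y
    using linf_h[of "{x, y}"] that by simp
  have complete: "\<exists>s. is_lub A le X s" if "X \<subseteq> A" for X
    using A.is_lub_Join[of X] that by fastforce
  have p_in: "\<And>x. x \<in> A \<Longrightarrow> p x \<in> A"
    using A.perp_in by simp
  have linf_in: "linf A le {x, y} \<in> A" if "x \<in> A" "y \<in> A" for x y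
    using A.Meet_in[of "{x, y}"] that by (simp add: omeet_def)
  show ?thesis
    unfolding complete_oml_def
  proof (intro conjI)
    show "\<forall>x\<in>B. le' x x"
      unfolding ball_B using ord A.ole_refl by simp
    show "\<forall>x\<in>B. \<forall>y\<in>B. le' x y \<and> le' y x \<longrightarrow> x = y"
      unfolding ball_B using antisym by (simp add: ord) blast
    show "\<forall>x\<in>B. \<forall>y\<in>B. \<forall>z\<in>B. le' x y \<and> le' y z \<longrightarrow> le' x z"
    proof (unfold ball_B, intro ballI impI)
      fix a b c assume "a \<in> A" "b \<in> A" "c \<in> A" "le' (h a) (h b) \<and> le' (h b) (h c)"
      then show "le' (h a) (h c)"
        using A.ole_trans[of a b c] ord by simp
    qed
    show "\<forall>Y. Y \<subseteq> B \<longrightarrow> (\<exists>s. is_lub B le' Y s)"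
      using ex_is_lub_image[where le = le and le' = le', OF B ord complete] by blast
    show "\<forall>x\<in>B. p' x \<in> B \<and> p' (p' x) = x"
      unfolding B using perp p_in A.perp_perp by simp
    show "\<forall>x\<in>B. \<forall>y\<in>B. le' x y \<longrightarrow> le' (p' y) (p' x)"
      unfolding B using ord perp p_in A.perp_antimono by simp
    show "\<forall>x\<in>B. linf B le' {x, p' x} = lsup B le' {} \<and> lsup B le' {x, p' x} = lsup B le' B"
      unfolding ball_B using A.complement_Meet_Join perp p_in lsup_h[of "{}"] lsup_h[of A] B lsup_h2 linf_h2
      by (simp add: ojoin_def omeet_def otop_def)
    show "\<forall>x\<in>B. \<forall>y\<in>B. le' x y \<longrightarrow> y = lsup B le' {x, linf B le' {y, p' x}}"
      unfolding ball_B using A.orthomodular ord perp p_in linf_in lsup_h2 linf_h2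
      by (simp add: ojoin_def omeet_def)
  qed
qed

section \<open>Sasaki projections\<close>

context complete_orthomodular
begin

definition sasaki :: "'m \<Rightarrow> 'm \<Rightarrow> 'm" where
  "sasaki m x = Meet {m, Join {perp m, x}}"

lemma sasaki_in [simp]: "m \<in> C \<Longrightarrow> x \<in> C \<Longrightarrow> sasaki m x \<in> C"
  by (simp add: sasaki_def)

lemma sasaki_le_iff:
  assumes m: "m \<in> C" and x: "x \<in> C" and y: "y \<in> C"
  shows "le (sasaki m x) y \<longleftrightarrow> le x (Join {perp m, Meet {m, y}})"
proof
  let ?u = "Join {perp m, x}" and ?v = "Join {perp m, Meet {m, y}}"
  have v: "?v \<in> C" and upper: "le (Meet {m, y}) ?v" "le (perp m) ?v"
    using m y by (auto intro: Join_upper)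
  assume "le (sasaki m x) y"
  then have "le (Meet {?u, m}) (Meet {m, y})"
    using m x y by (auto simp: sasaki_def le_Meet_iff insert_commute intro: Meet_lower)
  then have "le (Meet {?u, m}) ?v"
    using ole_trans[of "Meet {?u, m}" "Meet {m, y}" ?v] m x y v upper by simp
  then have "le (Join {perp m, Meet {?u, m}}) ?v"
    using m x v upper by (simp add: Join_le_iff)
  moreover have "?u = Join {perp m, Meet {?u, m}}"
    using orthomodular[of "perp m" ?u] m x by (simp add: Join_upper)
  ultimately show "le x ?v"
    using m x v by (simp add: Join_le_iff)
next
  let ?v = "Join {perp m, Meet {m, y}}"
  have v: "?v \<in> C" and sasaki_lower: "le (sasaki m x) m" "le (sasaki m x) (Join {perp m, x})"
    using m x y by (auto simp: sasaki_def intro: Meet_lower)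
  assume "le x ?v"
  then have "le (Join {perp m, x}) ?v"
    using m x y by (simp add: Join_le_iff Join_upper)
  then have "le (sasaki m x) ?v"
    using ole_trans[of "sasaki m x" "Join {perp m, x}" ?v] sasaki_lower m x v by simp
  then have "le (sasaki m x) (Meet {m, ?v})"
    using sasaki_lower m x v by (simp add: le_Meet_iff)
  also have "Meet {m, ?v} = Meet {m, y}"
    using orthomodular_dual[of "Meet {m, y}" m] m y by (simp add: Meet_lower insert_commute)
  finally show "le (sasaki m x) y"
    using m x y by (simp add: le_Meet_iff)
qed

lemma sasaki_perp_adjoint:
  assumes "m \<in> C" "x \<in> C" "y \<in> C"
  shows "le (sasaki m x) (perp y) \<longleftrightarrow> le x (perp (sasaki m y))"
proof -
  have "perp (sasaki m y) = Join {perp m, Meet {m, perp y}}"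
    using assms by (simp add: sasaki_def perp_Meet perp_Join)
  then show ?thesis
    using sasaki_le_iff[of m x "perp y"] assms by simp
qed

lemma sasaki_Top [simp]: "m \<in> C \<Longrightarrow> sasaki m Top = m"
  by (simp add: sasaki_def Join_Top Meet_Top)

lemma perp_Join_perp_eq_sasaki: "a \<in> C \<Longrightarrow> b \<in> C \<Longrightarrow> perp (Join {perp a, perp (Join {perp a, b})}) = sasaki a b"
  by (simp add: sasaki_def perp_Join perp_Meet)

end

section \<open>The quantale of adjointable maps\<close>

lemma complete_join_semilatticeI:
  assumes refl: "\<And>x. x \<in> kcar K \<Longrightarrow> r x x"
    and antisym: "\<And>x y. x \<in> kcar K \<Longrightarrow> y \<in> kcar K \<Longrightarrow> r x y \<Longrightarrow> r y x \<Longrightarrow> x = y"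
    and trans: "\<And>x y z. x \<in> kcar K \<Longrightarrow> y \<in> kcar K \<Longrightarrow> z \<in> kcar K \<Longrightarrow> r x y \<Longrightarrow> r y z \<Longrightarrow> r x z"
    and lub: "\<And>B. B \<subseteq> kcar K \<Longrightarrow> is_lub (kcar K) r B (kjoin K B)"
  shows "complete_join_semilattice K"
proof -
  have kle_iff: "kle K x y \<longleftrightarrow> r x y" if x: "x \<in> kcar K" and y: "y \<in> kcar K" for x y
  proof -
    have lub_xy: "is_lub (kcar K) r {x, y} (kjoin K {x, y})"
      using lub x y by simp
    then have "kjoin K {x, y} \<in> kcar K" "r x (kjoin K {x, y})" "r y (kjoin K {x, y})"
      unfolding is_lub_def by simp_all
    moreover have "r x y \<Longrightarrow> r (kjoin K {x, y}) y"
      using lub_xy refl[OF y] y unfolding is_lub_def by simp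
    ultimately show ?thesis
      unfolding kle_def using antisym[of "kjoin K {x, y}" y] y by metis
  qed
  show ?thesis
    unfolding complete_join_semilattice_def
  proof (intro conjI ballI allI impI)
    fix B assume B: "B \<subseteq> kcar K"
    have "(\<forall>b\<in>B. kle K b x) \<longleftrightarrow> (\<forall>b\<in>B. r b x)" if "x \<in> kcar K" for x
      using B that kle_iff by blast
    then show "is_lub (kcar K) (kle K) B (kjoin K B)"
      using lub[OF B] kle_iff unfolding is_lub_def by simp
  next
    show "kle K x x" if "x \<in> kcar K" for x
      using that refl kle_iff by simp
    show "x = y" if "x \<in> kcar K" "y \<in> kcar K" "kle K x y \<and> kle K y x" for x y
      using that antisym kle_iff by simp
    show "kle K x z" if "x \<in> kcar K" "y \<in> kcar K" "z \<in> kcar K" "kle K x y \<and> kle K y z" for x y z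
      using that trans[of x y z] kle_iff by simp
  qed
qed

context complete_orthomodular
begin

lemma Lin_closed: "f \<in> Lin M \<Longrightarrow> x \<in> C \<Longrightarrow> f x \<in> C"
  unfolding Lin_def by auto

lemma Lin_PiE: "f \<in> Lin M \<Longrightarrow> f \<in> C \<rightarrow>\<^sub>E C"
  unfolding Lin_def by auto

lemma LinI: "f \<in> C \<rightarrow>\<^sub>E C \<Longrightarrow> is_adjoint M f g \<Longrightarrow> f \<in> Lin M"
  unfolding Lin_def by auto

lemma Lin_eqI: "f \<in> Lin M \<Longrightarrow> g \<in> Lin M \<Longrightarrow> (\<And>x. x \<in> C \<Longrightarrow> f x = g x) \<Longrightarrow> f = g"
  by (metis Lin_PiE PiE_ext)

lemma is_adjoint_sym:
  assumes f: "f \<in> C \<rightarrow>\<^sub>E C" and fg: "is_adjoint M f g"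
  shows "is_adjoint M g f"
  unfolding is_adjoint_def
proof (intro conjI ballI)
  show "f \<in> C \<rightarrow>\<^sub>E C"
    by (rule f)
  fix x y assume x: "x \<in> C" and y: "y \<in> C"
  have "g x \<in> C" "f y \<in> C"
    using f fg x y unfolding is_adjoint_def by auto
  then show "le (g x) (perp y) \<longleftrightarrow> le x (perp (f y))"
    using fg x y le_perp_commute unfolding is_adjoint_def by metis
qed

lemma is_adjoint_unique:
  assumes "is_adjoint M f g" "is_adjoint M f g'"
  shows "g = g'"
proof (rule PiE_ext)
  show "g \<in> C \<rightarrow>\<^sub>E C" "g' \<in> C \<rightarrow>\<^sub>E C"
    using assms unfolding is_adjoint_def by auto
  fix y assume y: "y \<in> C"
  then have in_C: "g y \<in> C" "g' y \<in> C"
    using assms unfolding is_adjoint_def by auto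
  have "perp (g y) = perp (g' y)"
    by (rule eq_if_same_lower_bounds) (use assms y in_C in \<open>auto simp: is_adjoint_def\<close>)
  then show "g y = g' y"
    using in_C by (metis perp_perp)
qed

lemma is_adjoint_adj: "f \<in> Lin M \<Longrightarrow> is_adjoint M f (adj M f)"
proof -
  assume "f \<in> Lin M"
  then obtain g where g: "is_adjoint M f g"
    unfolding Lin_def by blast
  then have "adj M f = g"
    unfolding adj_def using is_adjoint_unique by (intro the_equality) blast+
  with g show ?thesis
    by simp
qed

lemma adj_eqI: "f \<in> Lin M \<Longrightarrow> is_adjoint M f g \<Longrightarrow> adj M f = g"
  using is_adjoint_adj is_adjoint_unique by blast

lemma is_adjoint_adj_sym: "f \<in> Lin M \<Longrightarrow> is_adjoint M (adj M f) f"
  using is_adjoint_sym[OF Lin_PiE is_adjoint_adj] .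

lemma adj_in_Lin: "f \<in> Lin M \<Longrightarrow> adj M f \<in> Lin M"
  using LinI[OF _ is_adjoint_adj_sym] is_adjoint_adj unfolding is_adjoint_def by blast

lemma adj_adj: "f \<in> Lin M \<Longrightarrow> adj M (adj M f) = f"
  by (rule adj_eqI[OF adj_in_Lin is_adjoint_adj_sym])

lemma le_perp_adj_iff:
  "f \<in> Lin M \<Longrightarrow> x \<in> C \<Longrightarrow> y \<in> C \<Longrightarrow> le (f x) (perp y) \<longleftrightarrow> le x (perp (adj M f y))"
  using is_adjoint_adj unfolding is_adjoint_def by blast

text \<open>Maps with an adjoint are residuated, hence preserve all joins.\<close>
lemma Lin_Join:
  assumes f: "f \<in> Lin M" and B: "B \<subseteq> C"
  shows "f (Join B) = Join (f ` B)"
proof (rule eq_if_same_upper_bounds)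
  have fB: "f ` B \<subseteq> C"
    using B f Lin_closed by blast
  show "f (Join B) \<in> C" "Join (f ` B) \<in> C"
    using f B fB Lin_closed by auto
  fix z assume z: "z \<in> C"
  have adj_z: "adj M f (perp z) \<in> C"
    using adj_in_Lin[OF f] z Lin_closed by simp
  have "le (f (Join B)) z \<longleftrightarrow> le (Join B) (perp (adj M f (perp z)))"
    using le_perp_adj_iff[OF f, of "Join B" "perp z"] B z by simp
  also have "\<dots> \<longleftrightarrow> (\<forall>b\<in>B. le b (perp (adj M f (perp z))))"
    using B adj_z by (simp add: Join_le_iff)
  also have "\<dots> \<longleftrightarrow> (\<forall>b\<in>B. le (f b) z)"
    using le_perp_adj_iff[OF f, of _ "perp z"] B z by auto
  also have "\<dots> \<longleftrightarrow> le (Join (f ` B)) z"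
    using fB z by (simp add: Join_le_iff)
  finally show "le (f (Join B)) z \<longleftrightarrow> le (Join (f ` B)) z" .
qed

lemma pi_proj_eq: "pi_proj M m = restrict (sasaki m) C"
  unfolding pi_proj_def sasaki_def by simp

lemma pi_proj_apply: "x \<in> C \<Longrightarrow> pi_proj M m x = sasaki m x"
  by (simp add: pi_proj_eq)

lemma is_adjoint_pi_proj: "m \<in> C \<Longrightarrow> is_adjoint M (pi_proj M m) (pi_proj M m)"
  unfolding is_adjoint_def pi_proj_eq using sasaki_perp_adjoint by auto

lemma pi_proj_in_Lin: "m \<in> C \<Longrightarrow> pi_proj M m \<in> Lin M"
  by (rule LinI[OF _ is_adjoint_pi_proj]) (auto simp: pi_proj_eq)

lemma adj_pi_proj: "m \<in> C \<Longrightarrow> adj M (pi_proj M m) = pi_proj M m"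
  by (simp add: adj_eqI is_adjoint_pi_proj pi_proj_in_Lin)

lemma pi_proj_Top: "m \<in> C \<Longrightarrow> pi_proj M m Top = m"
  by (simp add: pi_proj_eq)

lemma inj_on_pi_proj: "inj_on (pi_proj M) C"
  by (metis inj_onI pi_proj_Top)

lemma is_adjoint_compose:
  assumes f: "f \<in> Lin M" and g: "g \<in> Lin M"
  shows "is_adjoint M (compose C f g) (compose C (adj M g) (adj M f))"
  unfolding is_adjoint_def
proof (intro conjI ballI)
  show "compose C (adj M g) (adj M f) \<in> C \<rightarrow>\<^sub>E C"
    using adj_in_Lin[OF f] adj_in_Lin[OF g] by (auto simp: compose_def Lin_closed)
  fix x y assume x: "x \<in> C" and y: "y \<in> C"
  have "le (f (g x)) (perp y) \<longleftrightarrow> le (g x) (perp (adj M f y))"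
    using le_perp_adj_iff[OF f] g x y Lin_closed by blast
  also have "\<dots> \<longleftrightarrow> le x (perp (adj M g (adj M f y)))"
    using le_perp_adj_iff[OF g] adj_in_Lin[OF f] x y Lin_closed by blast
  finally show "le (compose C f g x) (perp y) \<longleftrightarrow> le x (perp (compose C (adj M g) (adj M f) y))"
    using x y by (simp add: compose_eq)
qed

lemma compose_in_Lin: "f \<in> Lin M \<Longrightarrow> g \<in> Lin M \<Longrightarrow> compose C f g \<in> Lin M"
  by (rule LinI[OF _ is_adjoint_compose]) (auto simp: compose_def Lin_closed)

lemma adj_compose: "f \<in> Lin M \<Longrightarrow> g \<in> Lin M \<Longrightarrow> adj M (compose C f g) = compose C (adj M g) (adj M f)"
  by (simp add: adj_eqI compose_in_Lin is_adjoint_compose)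

definition pointwise_join :: "('m \<Rightarrow> 'm) set \<Rightarrow> 'm \<Rightarrow> 'm" where
  "pointwise_join F = (\<lambda>x\<in>C. Join ((\<lambda>f. f x) ` F))"

lemma is_adjoint_pointwise_join:
  assumes F: "F \<subseteq> Lin M"
  shows "is_adjoint M (pointwise_join F) (pointwise_join (adj M ` F))"
  unfolding is_adjoint_def
proof (intro conjI ballI)
  show "pointwise_join (adj M ` F) \<in> C \<rightarrow>\<^sub>E C"
    unfolding pointwise_join_def using F adj_in_Lin Lin_closed by (auto intro!: Join_in)
  fix x y assume x: "x \<in> C" and y: "y \<in> C"
  have Fx: "(\<lambda>f. f x) ` F \<subseteq> C" and Fy: "(\<lambda>f. f y) ` adj M ` F \<subseteq> C"
    using F x y Lin_closed adj_in_Lin by auto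
  have "le (Join ((\<lambda>f. f x) ` F)) (perp y) \<longleftrightarrow> (\<forall>f\<in>F. le (f x) (perp y))"
    using Fx y by (simp add: Join_le_iff)
  also have "\<dots> \<longleftrightarrow> (\<forall>f\<in>F. le (adj M f y) (perp x))"
    using le_perp_adj_iff F x y le_perp_commute Lin_closed adj_in_Lin by (meson subsetD)
  also have "\<dots> \<longleftrightarrow> le (Join ((\<lambda>f. f y) ` adj M ` F)) (perp x)"
    using Fy x by (simp add: Join_le_iff)
  also have "\<dots> \<longleftrightarrow> le x (perp (Join ((\<lambda>f. f y) ` adj M ` F)))"
    using Fy x by (simp add: le_perp_commute)
  finally show "le (pointwise_join F x) (perp y) \<longleftrightarrow> le x (perp (pointwise_join (adj M ` F) y))"
    using x y by (simp add: pointwise_join_def)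
qed

lemma pointwise_join_in_Lin: "F \<subseteq> Lin M \<Longrightarrow> pointwise_join F \<in> Lin M"
  by (rule LinI[OF _ is_adjoint_pointwise_join])
    (auto simp: pointwise_join_def Lin_closed intro!: Join_in)

lemma adj_pointwise_join: "F \<subseteq> Lin M \<Longrightarrow> adj M (pointwise_join F) = pointwise_join (adj M ` F)"
  by (simp add: adj_eqI is_adjoint_pointwise_join pointwise_join_in_Lin)

lemma idM_in_Lin: "idM M \<in> Lin M"
  by (rule LinI[of _ "idM M"]) (auto simp: idM_def is_adjoint_def)

lemma lin_ida_simps [simp]:
  "kcar (lin_ida M) = Lin M" "kjoin (lin_ida M) = pointwise_join" "kmult (lin_ida M) = compose C"
  "kstar (lin_ida M) = adj M" "kunit (lin_ida M) = idM M"
  "kneg (lin_ida M) f = pi_proj M (perp (f Top))"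
  unfolding lin_ida_def pointwise_join_def by auto

lemma lin_ida_complete_join_semilattice: "complete_join_semilattice (lin_ida M)"
proof (rule complete_join_semilatticeI[where r = "\<lambda>f g. \<forall>x\<in>C. le (f x) (g x)"], unfold lin_ida_simps)
  fix B assume B: "B \<subseteq> Lin M"
  then have Bx: "(\<lambda>f. f x) ` B \<subseteq> C" if "x \<in> C" for x
    using that Lin_closed by auto
  show "is_lub (Lin M) (\<lambda>f g. \<forall>x\<in>C. le (f x) (g x)) B (pointwise_join B)"
    unfolding is_lub_def
  proof (intro conjI ballI impI)
    show "pointwise_join B \<in> Lin M"
      using B by (rule pointwise_join_in_Lin)
    show "le (b x) (pointwise_join B x)" if "b \<in> B" "x \<in> C" for b x
      using that Bx by (simp add: pointwise_join_def Join_upper)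
    show "le (pointwise_join B x) (h x)" if "h \<in> Lin M" "\<forall>b\<in>B. \<forall>x\<in>C. le (b x) (h x)" "x \<in> C" for h x
      using that Bx by (simp add: pointwise_join_def Join_le_iff Lin_closed)
  qed
next
  fix f g assume "f \<in> Lin M" "g \<in> Lin M" "\<forall>x\<in>C. le (f x) (g x)" "\<forall>x\<in>C. le (g x) (f x)"
  then show "f = g"
    by (intro Lin_eqI) (auto intro: ole_antisym Lin_closed)
qed (auto intro: ole_refl ole_trans Lin_closed)

lemma compose_pointwise_join_left:
  assumes f: "f \<in> Lin M" and B: "B \<subseteq> Lin M"
  shows "compose C f (pointwise_join B) = pointwise_join ((\<lambda>b. compose C f b) ` B)"
proof (rule ext)
  fix x
  show "compose C f (pointwise_join B) x = pointwise_join ((\<lambda>b. compose C f b) ` B) x"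
  proof (cases "x \<in> C")
    case True
    then have "(\<lambda>b. b x) ` B \<subseteq> C"
      using B Lin_closed by auto
    then show ?thesis
      using True Lin_Join[OF f] by (simp add: compose_def pointwise_join_def image_image)
  qed (simp add: compose_def pointwise_join_def)
qed

lemma compose_pointwise_join_right:
  "f \<in> Lin M \<Longrightarrow> compose C (pointwise_join B) f = pointwise_join ((\<lambda>b. compose C b f) ` B)"
  by (rule ext) (auto simp: compose_def pointwise_join_def image_image Lin_closed)

lemma idM_compose: "f \<in> Lin M \<Longrightarrow> compose C (idM M) f = f"
  using Id_compose Lin_PiE by (fastforce simp: idM_def PiE_def)

lemma compose_idM: "f \<in> Lin M \<Longrightarrow> compose C f (idM M) = f"
  using compose_Id Lin_PiE by (fastforce simp: idM_def PiE_def)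

lemma lin_ida_quantale: "involutive_unital_quantale (lin_ida M)"
  unfolding involutive_unital_quantale_def lin_ida_simps
proof (intro conjI ballI allI impI)
  fix f g h assume f: "f \<in> Lin M" and g: "g \<in> Lin M" and h: "h \<in> Lin M"
  show "compose C (compose C f g) h = compose C f (compose C g h)"
    using compose_assoc[of h C C f g] Lin_PiE[OF h] by (simp add: PiE_iff)
qed (simp_all add: lin_ida_complete_join_semilattice compose_in_Lin compose_pointwise_join_left
       compose_pointwise_join_right idM_in_Lin idM_compose compose_idM
       adj_in_Lin adj_adj adj_compose adj_pointwise_join)

end

section \<open>Quantales whose negation factors through the lattice\<close>

locale valued_quantale = complete_orthomodular M
  for M :: "'m ortho" +
  fixes K :: "'a ida" and val :: "'a \<Rightarrow> 'm" and proj :: "'m \<Rightarrow> 'a"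
  assumes quantale: "involutive_unital_quantale K"
    and val_in: "\<And>k. k \<in> kcar K \<Longrightarrow> val k \<in> C"
    and proj_in: "\<And>m. m \<in> C \<Longrightarrow> proj m \<in> kcar K"
    and val_proj: "\<And>m. m \<in> C \<Longrightarrow> val (proj m) = m"
    and kstar_proj: "\<And>m. m \<in> C \<Longrightarrow> kstar K (proj m) = proj m"
    and kneg_eq: "\<And>k. k \<in> kcar K \<Longrightarrow> kneg K k = proj (perp (val k))"
    and val_kjoin: "\<And>S. S \<subseteq> kcar K \<Longrightarrow> val (kjoin K S) = Join (val ` S)"
    and val_kmult_cong: "\<And>k l l'. k \<in> kcar K \<Longrightarrow> l \<in> kcar K \<Longrightarrow> l' \<in> kcar K \<Longrightarrow>
      val l = val l' \<Longrightarrow> val (kmult K k l) = val (kmult K k l')"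
    and val_kmult_proj: "\<And>m l. m \<in> C \<Longrightarrow> l \<in> kcar K \<Longrightarrow>
      val (kmult K (proj m) l) = sasaki m (val l)"
begin

lemma kjoin_in: "S \<subseteq> kcar K \<Longrightarrow> kjoin K S \<in> kcar K"
  using quantale is_lub_def
  unfolding involutive_unital_quantale_def complete_join_semilattice_def by metis

lemma kmult_in: "k \<in> kcar K \<Longrightarrow> l \<in> kcar K \<Longrightarrow> kmult K k l \<in> kcar K"
  using quantale unfolding involutive_unital_quantale_def by metis

lemma kneg_in: "k \<in> kcar K \<Longrightarrow> kneg K k \<in> kcar K"
  by (simp add: kneg_eq proj_in val_in)

lemma val_kneg: "k \<in> kcar K \<Longrightarrow> val (kneg K k) = perp (val k)"
  by (simp add: kneg_eq val_proj val_in)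

lemma kneg_kneg: "k \<in> kcar K \<Longrightarrow> kneg K (kneg K k) = proj (val k)"
  by (simp add: kneg_eq[OF kneg_in] val_kneg val_in)

lemma kneg_proj: "m \<in> C \<Longrightarrow> kneg K (proj m) = proj (perp m)"
  by (simp add: kneg_eq proj_in val_proj)

lemma val_kjoin_pair: "k \<in> kcar K \<Longrightarrow> l \<in> kcar K \<Longrightarrow> val (kjoin K {k, l}) = Join {val k, val l}"
  by (simp add: val_kjoin)

lemma is_ida: "is_ida K"
  unfolding is_ida_def
proof (intro conjI ballI allI impI)
  show "involutive_unital_quantale K"
    by (rule quantale)
  fix k assume k: "k \<in> kcar K"
  show "kneg K k \<in> kcar K" "kstar K (kneg K k) = kneg K k"
    using k by (simp_all add: kneg_in kneg_eq kstar_proj proj_in val_in)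
  fix l assume l: "l \<in> kcar K"
  show "kneg K (kmult K k (kneg K (kneg K l))) = kneg K (kmult K k l)"
    using k l val_kmult_cong[of k "proj (val l)" l]
    by (simp add: kneg_kneg kneg_eq kmult_in proj_in val_in val_proj)
  let ?a = "val k" and ?b = "val l"
  have a: "?a \<in> C" and b: "?b \<in> C"
    using k l by (simp_all add: val_in)
  have "kneg K (kneg K (kmult K (kneg K (kneg K k)) l)) = proj (sasaki ?a ?b)"
    using k l a by (simp add: kneg_kneg kmult_in proj_in val_kmult_proj)
  moreover have "val (kjoin K {kneg K k, kneg K (kjoin K {kneg K k, l})}) =
      Join {perp ?a, perp (Join {perp ?a, ?b})}"
    using k l by (simp add: kneg_in kjoin_in val_kjoin_pair val_kneg)
  then have "kneg K (kjoin K {kneg K k, kneg K (kjoin K {kneg K k, l})}) = proj (sasaki ?a ?b)"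
    using kneg_eq[of "kjoin K {kneg K k, kneg K (kjoin K {kneg K k, l})}"] k l a b
    by (simp add: kneg_in kjoin_in perp_Join_perp_eq_sasaki)
  ultimately show "kneg K (kneg K (kmult K (kneg K (kneg K k)) l)) =
      kneg K (kjoin K {kneg K k, kneg K (kjoin K {kneg K k, l})})"
    by simp
next
  fix S assume S: "S \<subseteq> kcar K"
  then have "val ` (\<lambda>k. kneg K (kneg K k)) ` S = val ` S"
    by (force simp: image_image kneg_kneg val_proj val_in)
  moreover have "(\<lambda>k. kneg K (kneg K k)) ` S \<subseteq> kcar K"
    using S kneg_in by auto
  ultimately show "kneg K (kjoin K ((\<lambda>k. kneg K (kneg K k)) ` S)) = kneg K (kjoin K S)"
    using S by (simp add: kneg_eq kjoin_in val_kjoin)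
qed

lemma tests_eq: "tests K = proj ` C"
proof
  show "tests K \<subseteq> proj ` C"
    unfolding tests_def by (auto simp: kneg_eq val_in)
  show "proj ` C \<subseteq> tests K"
  proof
    fix t assume "t \<in> proj ` C"
    then obtain m where m: "m \<in> C" and t: "t = proj m"
      by blast
    then have "t = kneg K (proj (perp m))"
      by (simp add: kneg_proj)
    then show "t \<in> tests K"
      unfolding tests_def using m proj_in by simp
  qed
qed

lemma tle_proj_iff:
  assumes a: "a \<in> C" and b: "b \<in> C"
  shows "tle K (proj a) (proj b) \<longleftrightarrow> le a b"
proof -
  have "kneg K (kneg K (kjoin K {proj a, proj b})) = proj (Join {a, b})"
    using a b by (simp add: kneg_kneg kjoin_in proj_in val_kjoin_pair val_proj)
  then have "tle K (proj a) (proj b) \<longleftrightarrow> proj (Join {a, b}) = proj b"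
    by (simp add: tle_def)
  also have "\<dots> \<longleftrightarrow> Join {a, b} = b"
    using a b val_proj by (metis Join_in empty_subsetI insert_subset)
  also have "\<dots> \<longleftrightarrow> le a b"
    using a b by (rule Join_pair_eq_iff)
  finally show ?thesis .
qed

lemma tests_complete_oml: "complete_oml (tests K) (tle K) (kneg K)"
proof (rule complete_oml_transfer[OF oml])
  show "bij_betw proj C (tests K)"
    unfolding bij_betw_def tests_eq by (metis inj_on_inverseI val_proj)
qed (simp_all add: tle_proj_iff kneg_proj)

end

context complete_orthomodular
begin

lemma lin_ida_valued: "valued_quantale M (lin_ida M) (\<lambda>f. f Top) (pi_proj M)"
proof unfold_locales
  fix S assume "S \<subseteq> kcar (lin_ida M)"
  then show "kjoin (lin_ida M) S Top = Join ((\<lambda>f. f Top) ` S)"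
    by (simp add: pointwise_join_def)
qed (simp_all add: lin_ida_quantale Lin_closed pi_proj_in_Lin pi_proj_Top adj_pi_proj compose_eq
       pi_proj_apply)

lemma lin_ida_is_ida: "is_ida (lin_ida M)"
  using lin_ida_valued by (rule valued_quantale.is_ida)

lemma tests_lin_ida: "tests (lin_ida M) = pi_proj M ` C"
  using lin_ida_valued by (rule valued_quantale.tests_eq)

end

section \<open>The powerset quantale\<close>

lemma Pow_subset_if_Union_closed:
  assumes "(\<lambda>x. {x}) ` X \<subseteq> A" and "\<And>B. B \<subseteq> A \<Longrightarrow> \<Union>B \<in> A"
  shows "Pow X \<subseteq> A"
proof
  fix Y assume "Y \<in> Pow X"
  then have "(\<lambda>x. {x}) ` Y \<subseteq> A"
    using assms(1) by blast
  then have "\<Union>((\<lambda>x. {x}) ` Y) \<in> A"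
    by (rule assms(2))
  then show "Y \<in> A"
    by simp
qed

lemma Union_singletons_eq_iff:
  assumes S: "S \<subseteq> range (\<lambda>x. {x})" and U: "U \<subseteq> range (\<lambda>x. {x})"
  shows "\<Union>S = \<Union>U \<longleftrightarrow> S = U"
proof
  assume "\<Union>S = \<Union>U"
  have "S = (\<lambda>x. {x}) ` \<Union>S"
    using S by blast
  also have "\<dots> = (\<lambda>x. {x}) ` \<Union>U"
    by (simp add: \<open>\<Union>S = \<Union>U\<close>)
  also have "\<dots> = U"
    using U by blast
  finally show "S = U" .
qed simp

locale lin_submonoid = complete_orthomodular M
  for M :: "'m ortho" +
  fixes L :: "('m \<Rightarrow> 'm) set"
  assumes submonoid: "inv_submonoid (lin_ida M) L"
    and tests_subset: "tests (lin_ida M) \<subseteq> L"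
begin

abbreviation "P \<equiv> pset_ida M L"

lemma L_subset_Lin: "L \<subseteq> Lin M"
  using submonoid by (simp add: inv_submonoid_def)

lemma L_closed: "f \<in> L \<Longrightarrow> x \<in> C \<Longrightarrow> f x \<in> C"
  using L_subset_Lin Lin_closed by blast

lemma compose_in_L: "f \<in> L \<Longrightarrow> g \<in> L \<Longrightarrow> compose C f g \<in> L"
  using submonoid by (simp add: inv_submonoid_def)

lemma adj_in_L: "f \<in> L \<Longrightarrow> adj M f \<in> L"
  using submonoid by (simp add: inv_submonoid_def)

lemma idM_in_L: "idM M \<in> L"
  using submonoid by (simp add: inv_submonoid_def)

lemma pi_proj_in_L: "m \<in> C \<Longrightarrow> pi_proj M m \<in> L"
  using tests_subset tests_lin_ida by blast

definition join_at_top :: "('m \<Rightarrow> 'm) set \<Rightarrow> 'm" where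
  "join_at_top A = Join ((\<lambda>a. a Top) ` A)"

lemma pset_ida_simps [simp]:
  "kcar P = Pow L" "kjoin P = Union" "kmult P A B = {compose C a b | a b. a \<in> A \<and> b \<in> B}"
  "kstar P A = adj M ` A" "kunit P = {idM M}" "kneg P A = {pi_proj M (perp (join_at_top A))}"
  unfolding pset_ida_def join_at_top_def by auto

lemma join_at_top_in: "A \<subseteq> L \<Longrightarrow> join_at_top A \<in> C"
  unfolding join_at_top_def using L_closed by (auto intro!: Join_in)

lemma join_at_top_pi_proj: "m \<in> C \<Longrightarrow> join_at_top {pi_proj M m} = m"
  by (simp add: join_at_top_def pi_proj_Top Join_singleton)

lemma join_at_top_Union:
  assumes S: "S \<subseteq> Pow L"
  shows "join_at_top (\<Union>S) = Join (join_at_top ` S)"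
proof -
  have tops: "(\<lambda>a. a Top) ` A \<subseteq> C" if "A \<in> S" for A
  proof -
    have "A \<subseteq> L"
      using that S by blast
    then show ?thesis
      by (auto intro: L_closed)
  qed
  have "join_at_top (\<Union>S) = Join (\<Union>((\<lambda>A. (\<lambda>a. a Top) ` A) ` S))"
    unfolding join_at_top_def by (simp only: image_Union)
  also have "\<dots> = Join (Join ` (\<lambda>A. (\<lambda>a. a Top) ` A) ` S)"
    using tops by (subst Join_Union) auto
  also have "\<dots> = Join (join_at_top ` S)"
    by (simp add: join_at_top_def image_image)
  finally show ?thesis .
qed

lemma join_at_top_kmult:
  assumes A: "A \<subseteq> L" and B: "B \<subseteq> L"
  shows "join_at_top (kmult P A B) = Join ((\<lambda>a. a (join_at_top B)) ` A)"
proof -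
  have tops: "(\<lambda>b. b Top) ` B \<subseteq> C"
    using B L_closed by auto
  have tops_kmult: "(\<lambda>c. c Top) ` kmult P A B = \<Union>((\<lambda>a. a ` (\<lambda>b. b Top) ` B) ` A)"
  proof (intro set_eqI iffI)
    fix y assume "y \<in> (\<lambda>c. c Top) ` kmult P A B"
    then obtain a b where "a \<in> A" "b \<in> B" "y = compose C a b Top"
      by auto
    then show "y \<in> \<Union>((\<lambda>a. a ` (\<lambda>b. b Top) ` B) ` A)"
      by (simp add: compose_eq) blast
  next
    fix y assume "y \<in> \<Union>((\<lambda>a. a ` (\<lambda>b. b Top) ` B) ` A)"
    then obtain a b where ab: "a \<in> A" "b \<in> B" and "y = a (b Top)"
      by blast
    then have "y = compose C a b Top"
      by (simp add: compose_eq)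
    then show "y \<in> (\<lambda>c. c Top) ` kmult P A B"
      using ab by auto
  qed
  have "join_at_top (kmult P A B) = Join ((\<lambda>a. Join (a ` (\<lambda>b. b Top) ` B)) ` A)"
    unfolding join_at_top_def tops_kmult using A tops L_closed
    by (subst Join_Union) (auto simp: image_image)
  also have "(\<lambda>a. Join (a ` (\<lambda>b. b Top) ` B)) ` A = (\<lambda>a. a (join_at_top B)) ` A"
  proof (rule image_cong)
    fix a assume "a \<in> A"
    then have "a \<in> Lin M"
      using A L_subset_Lin by blast
    then show "Join (a ` (\<lambda>b. b Top) ` B) = a (join_at_top B)"
      unfolding join_at_top_def using tops by (simp add: Lin_Join)
  qed simp
  finally show ?thesis .
qed

lemma adj_kmult:
  assumes "A \<subseteq> L" "B \<subseteq> L"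
  shows "adj M ` kmult P A B = kmult P (adj M ` B) (adj M ` A)"
proof (intro set_eqI iffI)
  fix c assume "c \<in> adj M ` kmult P A B"
  then obtain a b where ab: "a \<in> A" "b \<in> B" and c: "c = adj M (compose C a b)"
    by auto
  have "a \<in> Lin M" "b \<in> Lin M"
    using ab assms L_subset_Lin by blast+
  then have "c = compose C (adj M b) (adj M a)"
    using c by (simp add: adj_compose)
  then show "c \<in> kmult P (adj M ` B) (adj M ` A)"
    using ab by auto
next
  fix c assume "c \<in> kmult P (adj M ` B) (adj M ` A)"
  then obtain a b where ab: "a \<in> A" "b \<in> B" and c: "c = compose C (adj M b) (adj M a)"
    by auto
  have "a \<in> Lin M" "b \<in> Lin M"
    using ab assms L_subset_Lin by blast+
  then have "c = adj M (compose C a b)"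
    using c by (simp add: adj_compose)
  then show "c \<in> adj M ` kmult P A B"
    using ab by auto
qed

lemma kmult_assoc:
  assumes "A \<subseteq> L" "B \<subseteq> L" "D \<subseteq> L"
  shows "kmult P (kmult P A B) D = kmult P A (kmult P B D)"
proof -
  have assoc: "compose C (compose C a b) d = compose C a (compose C b d)"
    if "a \<in> A" "b \<in> B" "d \<in> D" for a b d
    using compose_assoc[of d C C a b] that assms L_subset_Lin Lin_PiE by (force simp: PiE_iff)
  show ?thesis
  proof (intro set_eqI iffI)
    fix c assume "c \<in> kmult P (kmult P A B) D"
    then obtain a b d where abd: "a \<in> A" "b \<in> B" "d \<in> D" and "c = compose C (compose C a b) d"
      by auto
    then have "c = compose C a (compose C b d)"
      by (simp add: assoc)
    then show "c \<in> kmult P A (kmult P B D)"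
      using abd by auto
  next
    fix c assume "c \<in> kmult P A (kmult P B D)"
    then obtain a b d where abd: "a \<in> A" "b \<in> B" "d \<in> D" and "c = compose C a (compose C b d)"
      by auto
    then have "c = compose C (compose C a b) d"
      by (simp add: assoc)
    then show "c \<in> kmult P (kmult P A B) D"
      using abd by auto
  qed
qed

lemma pset_ida_quantale: "involutive_unital_quantale P"
  unfolding involutive_unital_quantale_def
proof (intro conjI ballI allI impI)
  show "complete_join_semilattice P"
    by (rule complete_join_semilatticeI[where r = "(\<subseteq>)"]) (auto simp: is_lub_def)
  show "kunit P \<in> kcar P"
    by (simp add: idM_in_L)
  fix A assume A: "A \<in> kcar P"
  show "kmult P (kunit P) A = A" "kmult P A (kunit P) = A"
    using A L_subset_Lin by (force simp: idM_compose compose_idM)+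
  show "kstar P A \<in> kcar P"
    using A by (auto simp: adj_in_L)
  have "kstar P (kstar P A) = (\<lambda>a. adj M (adj M a)) ` A"
    by (simp add: image_image)
  also have "\<dots> = A"
    using A L_subset_Lin by (subst image_cong[where g = "\<lambda>a. a"]) (auto simp: adj_adj)
  finally show "kstar P (kstar P A) = A" .
  fix B assume B: "B \<in> kcar P"
  show "kmult P A B \<in> kcar P"
    using A B by (auto intro: compose_in_L)
  show "kstar P (kmult P A B) = kmult P (kstar P B) (kstar P A)"
    using A B by (simp only: adj_kmult pset_ida_simps(1,4) PowD)
  fix D assume "D \<in> kcar P"
  then show "kmult P (kmult P A B) D = kmult P A (kmult P B D)"
    using A B by (simp only: kmult_assoc pset_ida_simps(1) PowD)
next
  fix A S assume "A \<in> kcar P" "S \<subseteq> kcar P"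
  show "kmult P A (kjoin P S) = kjoin P ((\<lambda>B. kmult P A B) ` S)"
    "kmult P (kjoin P S) A = kjoin P ((\<lambda>B. kmult P B A) ` S)"
    by auto
next
  fix S assume "S \<subseteq> kcar P"
  show "kstar P (kjoin P S) = kjoin P (kstar P ` S)"
    by auto
qed

lemma pset_ida_valued: "valued_quantale M P join_at_top (\<lambda>m. {pi_proj M m})"
proof unfold_locales
  fix A A' B assume "A \<in> kcar P" "B \<in> kcar P" "A' \<in> kcar P" "join_at_top B = join_at_top A'"
  then show "join_at_top (kmult P A B) = join_at_top (kmult P A A')"
    by (simp only: join_at_top_kmult pset_ida_simps(1) PowD)
next
  fix m B assume "m \<in> C" "B \<in> kcar P"
  then show "join_at_top (kmult P {pi_proj M m} B) = sasaki m (join_at_top B)"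
    by (simp del: pset_ida_simps(3) add: join_at_top_kmult pi_proj_in_L join_at_top_in
        Join_singleton pi_proj_apply)
qed (simp_all add: pset_ida_quantale join_at_top_in pi_proj_in_L join_at_top_pi_proj adj_pi_proj
       join_at_top_Union)

sublocale pset: valued_quantale M P join_at_top "\<lambda>m. {pi_proj M m}"
  by (rule pset_ida_valued)

lemma bullet_singleton: "f \<in> L \<Longrightarrow> m \<in> C \<Longrightarrow> bullet P {f} {pi_proj M m} = {pi_proj M (f m)}"
  unfolding bullet_def
  using pset.kneg_kneg[OF pset.kmult_in, of "{f}" "{pi_proj M m}"] join_at_top_kmult[of "{f}" "{pi_proj M m}"]
  by (simp del: pset_ida_simps(3,6) add: pi_proj_in_L join_at_top_pi_proj Join_singleton L_closed)

lemma kequiv_singleton_iff: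
  assumes f: "f \<in> L" and g: "g \<in> L"
  shows "kequiv P {f} {g} \<longleftrightarrow> f = g"
proof
  assume equiv: "kequiv P {f} {g}"
  have "f m = g m" if m: "m \<in> C" for m
  proof -
    have "{pi_proj M m} \<in> tests P"
      using m pset.tests_eq by blast
    then have "bullet P {f} {pi_proj M m} = bullet P {g} {pi_proj M m}"
      using equiv unfolding kequiv_def by blast
    then have "pi_proj M (f m) = pi_proj M (g m)"
      using f g m by (simp add: bullet_singleton)
    then show ?thesis
      using inj_on_pi_proj f g m L_closed by (meson inj_onD)
  qed
  then show "f = g"
    using f g L_subset_Lin by (blast intro: Lin_eqI)
qed (simp add: kequiv_def)

lemma T_based_oda_pset_ida:
  assumes T: "T P = (\<lambda>f. {f}) ` L"
  shows "T_based_oda T P"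
  unfolding T_based_oda_def
proof (intro conjI allI impI ballI)
  show "is_ida P"
    by (rule pset.is_ida)
  show "complete_oml (tests P) (tle P) (kneg P)"
    by (rule pset.tests_complete_oml)
next
  fix A assume "T P \<subseteq> A \<and> A \<subseteq> kcar P \<and> (\<forall>x\<in>A. \<forall>y\<in>A. kmult P x y \<in> A) \<and>
      (\<forall>x\<in>A. kstar P x \<in> A) \<and> (\<forall>B. B \<subseteq> A \<longrightarrow> kjoin P B \<in> A)"
  then show "A = kcar P"
    using Pow_subset_if_Union_closed[of L A] T by auto
next
  fix S U assume "S \<subseteq> T P \<and> U \<subseteq> T P"
  then have "S \<subseteq> range (\<lambda>x. {x})" "U \<subseteq> range (\<lambda>x. {x})"
    using T by auto
  then show "kjoin P S = kjoin P U \<longleftrightarrow> S = U"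
    by (simp add: Union_singletons_eq_iff)
next
  fix s t assume "s \<in> T P" "t \<in> T P"
  then show "s = t \<longleftrightarrow> kequiv P s t"
    using kequiv_singleton_iff T by auto
qed

end

theorem lemma5p1:
  fixes Ta :: "('m \<Rightarrow> 'm) ida \<Rightarrow> ('m \<Rightarrow> 'm) set"
    and Tb :: "('m \<Rightarrow> 'm) set ida \<Rightarrow> ('m \<Rightarrow> 'm) set set"
    and M :: "'m ortho"
  assumes T1a: "T1 Ta" and T1b: "T1 Tb"
    and T3: "T3 Ta Tb"
    and T4aa: "T4 Ta Ta" and T4ab: "T4 Ta Tb" and T4ba: "T4 Tb Ta" and T4bb: "T4 Tb Tb"
    and M: "is_complete_oml M"
  shows "T_based_oda Tb (pset_ida M (Ta (lin_ida M)))"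
proof -
  interpret complete_orthomodular M
    using M by unfold_locales
  have "inv_submonoid (lin_ida M) (Ta (lin_ida M))" "tests (lin_ida M) \<subseteq> Ta (lin_ida M)"
    using T1a lin_ida_is_ida unfolding T1_def by auto
  then interpret lin_submonoid M "Ta (lin_ida M)"
    by unfold_locales
  have "Tb P = (\<lambda>f. {f}) ` Ta (lin_ida M)"
    using T3 M unfolding T3_def im_iso_def bij_betw_def by auto
  then show ?thesis
    by (rule T_based_oda_pset_ida)
qed

end
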